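(* For every integer $k\ge 0$, as $n\to\infty$, \[ \langle S_{2,n}^{-k}\rangle\sim\left(\frac{n}{4}\right)^{-k}. \]
   Context: For $n\ge 1$, let $\Omega_n$ be the set of rooted plane (ordered) full binary trees with $n$ leaves (every internal node has exactly two children, left and right distinguished). The random model is $\Omega_n$ with the uniform probability measure $P_n$; $\langle\cdot\rangle$ denotes expectation with respect to $P_n$. Horton–Strahler ordering: every leaf has order 1; an internal node whose two children have different orders $r_1\neq r_2$ has order $\max\{r_1,r_2\}$; an internal node whose two children both have order $r$ has order $r+1$. A branch of order $r$ is a maximal connected path consisting of nodes all of order $r$. $S_{2,n}(\tau)$ is the number of branches of order $2$ in $\tau\in\Omega_n$; for $n\ge 2$ one has $S_{2,n}\ge 1$. For sequences, $a_n\sim b_n$ means $\lim_{n\to\infty}a_n/b_n=1$. *)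

theory Defs
  imports Complex_Main "HOL-Library.Landau_Symbols"
begin

datatype tree = Leaf | Node tree tree

fun leaves :: "tree \<Rightarrow> nat" where
  "leaves Leaf = 1"
| "leaves (Node l r) = leaves l + leaves r"

definition Omega :: "nat \<Rightarrow> tree set" where
  "Omega n = {t. leaves t = n}"

fun hs_order :: "tree \<Rightarrow> nat" where
  "hs_order Leaf = 1"
| "hs_order (Node l r) =
     (if hs_order l = hs_order r then hs_order l + 1 else max (hs_order l) (hs_order r))"

text \<open>Number of branches (maximal connected paths of nodes of order r) of order r.
A node of order r extends the branch of a child of order r if it has one
(it can have at most one), otherwise it starts a new branch.\<close>
fun branches :: "nat \<Rightarrow> tree \<Rightarrow> nat" where
  "branches r Leaf = (if r = 1 then 1 else 0)"
| "branches r (Node a b) = branches r a + branches r b +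
     (if hs_order (Node a b) = r \<and> hs_order a \<noteq> r \<and> hs_order b \<noteq> r then 1 else 0)"

definition uexp :: "nat \<Rightarrow> (tree \<Rightarrow> real) \<Rightarrow> real" where
  "uexp n f = (\<Sum>t\<in>Omega n. f t) / real (card (Omega n))"

end

theory Submission
  imports Defs "HOL-Real_Asymp.Real_Asymp"
begin

text \<open>Branches of order 2 are exactly cherries, i.e.\ internal nodes whose two children are leaves.
Remy's leaf insertion turns the trees with \<open>n\<close> leaves, a marked node and a side into the trees
with \<open>n + 1\<close> leaves and a marked leaf, and yields a linear recurrence for the number \<open>N(n, c)\<close> of
trees with \<open>n\<close> leaves and \<open>c\<close> cherries. It implies
\<open>4 c (c + 1) N(n, c + 1) = (n - 2c) (n - 2c - 1) N(n, c)\<close>, so \<open>N(n, \<cdot>)\<close> increases by a factor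
\<open>1 + \<epsilon>\<close> per step below \<open>(1 - \<epsilon>) n / 4\<close> and decreases likewise above \<open>(1 + \<epsilon>) n / 4\<close>. Hence the
number of cherries of a uniform tree lies outside \<open>[(1 - \<epsilon>) n / 4, (1 + \<epsilon>) n / 4]\<close> with
exponentially small probability, which beats the polynomial bound \<open>(n / 4c)\<^sup>k \<le> n\<^sup>k\<close> on the
integrand there.\<close>

section \<open>Cherries\<close>

fun cherries :: "tree \<Rightarrow> nat" where
  "cherries Leaf = 0"
| "cherries (Node l r) = (if l = Leaf \<and> r = Leaf then 1 else cherries l + cherries r)"

lemma hs_order_ge_1: "hs_order t \<ge> 1"
  by (induction t) auto

lemma hs_order_eq_1_iff: "hs_order t = 1 \<longleftrightarrow> t = Leaf"
proof (cases t)
  case (Node l r)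
  then show ?thesis using hs_order_ge_1[of l] hs_order_ge_1[of r] by auto
qed simp

lemma branches_2_eq_cherries: "branches 2 t = cherries t"
proof (induction t)
  case (Node a b)
  have "\<not> (hs_order (Node a b) = 2 \<and> hs_order a \<noteq> 2 \<and> hs_order b \<noteq> 2)"
    if "a \<noteq> Leaf \<or> b \<noteq> Leaf"
  proof
    assume h: "hs_order (Node a b) = 2 \<and> hs_order a \<noteq> 2 \<and> hs_order b \<noteq> 2"
    from that have "hs_order a \<ge> 3 \<or> hs_order b \<ge> 3"
      using h hs_order_eq_1_iff hs_order_ge_1[of a] hs_order_ge_1[of b] by fastforce
    then show False using h by (auto split: if_splits)
  qed
  with Node show ?case
    by (cases "a = Leaf \<and> b = Leaf") auto
qed simp

lemma leaves_ge_1: "leaves t \<ge> 1"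
  by (induction t) auto

lemma two_cherries_le_leaves: "2 * cherries t \<le> leaves t"
  by (induction t) auto

lemma cherries_ge_1: "t \<noteq> Leaf \<Longrightarrow> cherries t \<ge> 1"
proof (induction t)
  case (Node l r)
  then show ?case by (cases l; cases r) auto
qed simp

lemma finite_leaves_le: "finite {t. leaves t \<le> n}"
proof (induction n)
  case 0
  have "{t. leaves t \<le> 0} = {}" using leaves_ge_1 by (metis Collect_empty_eq le_zero_eq not_one_le_zero)
  then show ?case by (metis finite.emptyI)
next
  case (Suc n)
  have "{t. leaves t \<le> Suc n} \<subseteq> insert Leaf (case_prod Node ` ({t. leaves t \<le> n} \<times> {t. leaves t \<le> n}))"
  proof
    fix t assume "t \<in> {t. leaves t \<le> Suc n}"
    then show "t \<in> insert Leaf (case_prod Node ` ({t. leaves t \<le> n} \<times> {t. leaves t \<le> n}))"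
    proof (cases t)
      case (Node a b)
      with \<open>t \<in> _\<close> leaves_ge_1[of a] leaves_ge_1[of b] show ?thesis by force
    qed simp
  qed
  then show ?case by (rule finite_subset) (use Suc in auto)
qed

lemma finite_Omega: "finite (Omega n)"
  unfolding Omega_def by (rule finite_subset[OF _ finite_leaves_le[of n]]) auto

fun comb :: "nat \<Rightarrow> tree" where
  "comb 0 = Leaf"
| "comb (Suc m) = Node Leaf (comb m)"

lemma leaves_comb: "leaves (comb m) = Suc m"
  by (induction m) auto

lemma card_Omega_pos: "n \<ge> 1 \<Longrightarrow> card (Omega n) > 0"
  using finite_Omega[of n] leaves_comb[of "n - 1"] card_gt_0_iff
  unfolding Omega_def by fastforce

section \<open>Remy's leaf insertion\<close>

fun positions :: "tree \<Rightarrow> bool list set" where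
  "positions Leaf = {[]}"
| "positions (Node l r) = insert [] (Cons False ` positions l \<union> Cons True ` positions r)"

fun leaf_positions :: "tree \<Rightarrow> bool list set" where
  "leaf_positions Leaf = {[]}"
| "leaf_positions (Node l r) = Cons False ` leaf_positions l \<union> Cons True ` leaf_positions r"

fun add_leaf :: "tree \<Rightarrow> bool list \<Rightarrow> bool \<Rightarrow> tree" where
  "add_leaf t [] b = (if b then Node t Leaf else Node Leaf t)"
| "add_leaf (Node l r) (False # p) b = Node (add_leaf l p b) r"
| "add_leaf (Node l r) (True # p) b = Node l (add_leaf r p b)"
| "add_leaf Leaf (_ # _) _ = Leaf"

lemma finite_positions: "finite (positions t)"
  by (induction t) auto

lemma finite_leaf_positions: "finite (leaf_positions t)"
  by (induction t) auto

lemma card_leaf_positions: "card (leaf_positions t) = leaves t"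
proof (induction t)
  case (Node l r)
  have "card (leaf_positions (Node l r)) = card (leaf_positions l) + card (leaf_positions r)"
    using card_Un_disjoint[of "Cons False ` leaf_positions l" "Cons True ` leaf_positions r"]
    by (auto simp: finite_leaf_positions card_image)
  then show ?case using Node by simp
qed simp

lemma add_leaf_neq_Leaf: "p \<in> positions t \<Longrightarrow> add_leaf t p b \<noteq> Leaf"
  by (induction t p b rule: add_leaf.induct) auto

lemma leaves_add_leaf: "p \<in> positions t \<Longrightarrow> leaves (add_leaf t p b) = Suc (leaves t)"
  by (induction t p b rule: add_leaf.induct) auto

lemma new_leaf_in_leaf_positions: "p \<in> positions t \<Longrightarrow> p @ [b] \<in> leaf_positions (add_leaf t p b)"
  by (induction t p b rule: add_leaf.induct) auto

lemma add_leaf_inject: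
  "p \<in> positions t \<Longrightarrow> p \<in> positions t' \<Longrightarrow> add_leaf t p b = add_leaf t' p b \<Longrightarrow> t = t'"
proof (induction t p b arbitrary: t' rule: add_leaf.induct)
  case (2 l r p b)
  then show ?case by (cases t') auto
next
  case (3 l r p b)
  then show ?case by (cases t') auto
qed (auto split: if_splits)

lemma ex_add_leaf:
  assumes "q \<in> leaf_positions t'" "t' \<noteq> Leaf"
  shows "\<exists>t p b. p \<in> positions t \<and> t' = add_leaf t p b \<and> q = p @ [b]"
  using assms
proof (induction t' arbitrary: q)
  case (Node l r)
  from Node.prems(1) consider (L) q' where "q = False # q'" "q' \<in> leaf_positions l"
    | (R) q' where "q = True # q'" "q' \<in> leaf_positions r" by auto
  then show ?case
  proof cases
    case L
    show ?thesis
    proof (cases "l = Leaf")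
      case True
      with L have "[] \<in> positions r \<and> Node l r = add_leaf r [] False \<and> q = [] @ [False]"
        by (cases r) auto
      then show ?thesis by blast
    next
      case False
      with Node.IH(1) L obtain t p b where "p \<in> positions t" "l = add_leaf t p b" "q' = p @ [b]"
        by blast
      with L have "False # p \<in> positions (Node t r) \<and> Node l r = add_leaf (Node t r) (False # p) b
          \<and> q = (False # p) @ [b]" by simp
      then show ?thesis by blast
    qed
  next
    case R
    show ?thesis
    proof (cases "r = Leaf")
      case True
      with R have "[] \<in> positions l \<and> Node l r = add_leaf l [] True \<and> q = [] @ [True]"
        by (cases l) auto
      then show ?thesis by blast
    next
      case False
      with Node.IH(2) R obtain t p b where "p \<in> positions t" "r = add_leaf t p b" "q' = p @ [b]"
        by blast
      with R have "True # p \<in> positions (Node l t) \<and> Node l r = add_leaf (Node l t) (True # p) b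
          \<and> q = (True # p) @ [b]" by simp
      then show ?thesis by blast
    qed
  qed
qed simp

lemma bij_betw_add_leaf:
  assumes "n \<ge> 1"
  shows "bij_betw (\<lambda>(t, p, b). (add_leaf t p b, p @ [b]))
           (SIGMA t:Omega n. positions t \<times> UNIV) (SIGMA t:Omega (Suc n). leaf_positions t)"
proof (rule bij_betw_imageI)
  show "inj_on (\<lambda>(t, p, b). (add_leaf t p b, p @ [b])) (SIGMA t:Omega n. positions t \<times> UNIV)"
    by (rule inj_onI) (auto dest: add_leaf_inject)
  show "(\<lambda>(t, p, b). (add_leaf t p b, p @ [b])) ` (SIGMA t:Omega n. positions t \<times> UNIV)
      = (SIGMA t:Omega (Suc n). leaf_positions t)"
  proof (intro equalityI subsetI)
    fix z assume "z \<in> (SIGMA t:Omega (Suc n). leaf_positions t)"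
    then obtain t' q where z: "z = (t', q)" "leaves t' = Suc n" "q \<in> leaf_positions t'"
      unfolding Omega_def by auto
    with assms have "t' \<noteq> Leaf" by auto
    with ex_add_leaf[OF z(3)] obtain t p b
      where tpb: "p \<in> positions t" "t' = add_leaf t p b" "q = p @ [b]" by blast
    with z(2) have "leaves t = n" using leaves_add_leaf by simp
    with z tpb show "z \<in> (\<lambda>(t, p, b). (add_leaf t p b, p @ [b])) ` (SIGMA t:Omega n. positions t \<times> UNIV)"
      unfolding Omega_def by force
  qed (auto simp: Omega_def leaves_add_leaf new_leaf_in_leaf_positions)
qed

text \<open>Of the \<open>2 leaves t - 1\<close> insertion points, exactly the leaves outside cherries create a new
cherry; inserting anywhere else keeps the number of cherries.\<close>

lemma sum_cherries_add_leaf: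
  fixes g :: "nat \<Rightarrow> real"
  shows "(\<Sum>p\<in>positions t. g (cherries (add_leaf t p b)))
       = (real (leaves t) - 2 * real (cherries t)) * g (cherries t + 1)
         + (real (leaves t) - 1 + 2 * real (cherries t)) * g (cherries t)"
proof (induction t arbitrary: g)
  case (Node l r)
  show ?case
  proof (cases "l = Leaf \<and> r = Leaf")
    case False
    have disjoint: "Cons False ` positions l \<inter> Cons True ` positions r = {}" by auto
    have "(\<Sum>p\<in>positions (Node l r). g (cherries (add_leaf (Node l r) p b)))
        = g (cherries (add_leaf (Node l r) [] b))
          + (\<Sum>p\<in>Cons False ` positions l. g (cherries (add_leaf (Node l r) p b)))
          + (\<Sum>p\<in>Cons True ` positions r. g (cherries (add_leaf (Node l r) p b)))"
      by (simp only: positions.simps, subst sum.insert)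
        (auto simp: finite_positions sum.union_disjoint[OF _ _ disjoint] simp del: add_leaf.simps)
    also have "\<dots> = g (cherries (Node l r))
          + (\<Sum>p\<in>positions l. g (cherries (add_leaf l p b) + cherries r))
          + (\<Sum>p\<in>positions r. g (cherries l + cherries (add_leaf r p b)))"
      using False by (auto simp: sum.reindex add_leaf_neq_Leaf cong: sum.cong)
    finally show ?thesis
      using False Node.IH(1)[of "\<lambda>x. g (x + cherries r)"] Node.IH(2)[of "\<lambda>x. g (cherries l + x)"]
      by (simp add: algebra_simps)
  qed simp
qed simp

lemma sum_cherries_Omega_Suc:
  fixes g :: "nat \<Rightarrow> real"
  assumes "n \<ge> 1"
  shows "real (Suc n) * (\<Sum>t\<in>Omega (Suc n). g (cherries t))
       = 2 * (\<Sum>t\<in>Omega n. (real n - 2 * real (cherries t)) * g (cherries t + 1)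
                             + (real n - 1 + 2 * real (cherries t)) * g (cherries t))"
proof -
  have "real (Suc n) * (\<Sum>t\<in>Omega (Suc n). g (cherries t))
      = (\<Sum>t\<in>Omega (Suc n). \<Sum>q\<in>leaf_positions t. g (cherries t))"
    unfolding sum_distrib_left by (rule sum.cong) (auto simp: card_leaf_positions Omega_def)
  also have "\<dots> = (\<Sum>(t, q)\<in>(SIGMA t:Omega (Suc n). leaf_positions t). g (cherries t))"
    by (rule sum.Sigma) (auto simp: finite_Omega finite_leaf_positions)
  also have "\<dots> = (\<Sum>(t, p, b)\<in>(SIGMA t:Omega n. positions t \<times> UNIV). g (cherries (add_leaf t p b)))"
    using sum.reindex_bij_betw[OF bij_betw_add_leaf[OF assms], of "\<lambda>(t, q). g (cherries t)"]
    by (simp add: split_def)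
  also have "\<dots> = (\<Sum>t\<in>Omega n. \<Sum>(p, b)\<in>positions t \<times> UNIV. g (cherries (add_leaf t p b)))"
    by (rule sum.Sigma[symmetric]) (auto simp: finite_Omega finite_positions)
  also have "\<dots> = (\<Sum>t\<in>Omega n. \<Sum>b\<in>UNIV. \<Sum>p\<in>positions t. g (cherries (add_leaf t p b)))"
    by (simp add: sum.cartesian_product[symmetric] sum.swap[of _ "positions _"])
  also have "\<dots> = 2 * (\<Sum>t\<in>Omega n. (real n - 2 * real (cherries t)) * g (cherries t + 1)
                                   + (real n - 1 + 2 * real (cherries t)) * g (cherries t))"
    by (simp add: sum_cherries_add_leaf UNIV_bool sum_distrib_left Omega_def)
  finally show ?thesis .
qed

section \<open>Counting trees by cherries\<close>

definition cherry_count :: "nat \<Rightarrow> nat \<Rightarrow> nat" where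
  "cherry_count n c = card {t \<in> Omega n. cherries t = c}"

lemma sum_Omega_cherries:
  fixes f :: "nat \<Rightarrow> real"
  assumes "n \<ge> 2"
  shows "(\<Sum>t\<in>Omega n. f (cherries t)) = (\<Sum>c\<in>{1..n}. f c * real (cherry_count n c))"
proof -
  have "cherries t \<in> {1..n}" if "t \<in> Omega n" for t
    using that assms cherries_ge_1[of t] two_cherries_le_leaves[of t]
    by (cases t) (auto simp: Omega_def)
  then have "cherries ` Omega n \<subseteq> {1..n}" by blast
  then have "(\<Sum>t\<in>Omega n. f (cherries t))
      = (\<Sum>c\<in>{1..n}. \<Sum>t\<in>{t \<in> Omega n. cherries t = c}. f (cherries t))"
    by (rule sum.group[OF finite_Omega finite_atLeastAtMost, symmetric])
  then show ?thesis by (simp add: cherry_count_def mult.commute)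
qed

lemma cherry_count_eq_sum: "real (cherry_count n c) = (\<Sum>t\<in>Omega n. of_bool (cherries t = c))"
  by (simp add: cherry_count_def finite_Omega Int_def)

lemma cherry_count_eq_0:
  assumes "n < 2 * c"
  shows "cherry_count n c = 0"
proof -
  have "cherries t \<noteq> c" if "t \<in> Omega n" for t
    using assms two_cherries_le_leaves[of t] that by (auto simp: Omega_def)
  then have "{t \<in> Omega n. cherries t = c} = {}" by blast
  then show ?thesis unfolding cherry_count_def by (metis card.empty)
qed

lemma cherry_count_0:
  assumes "n \<ge> 2"
  shows "cherry_count n 0 = 0"
proof -
  have "cherries t \<noteq> 0" if "t \<in> Omega n" for t
    using assms cherries_ge_1[of t] that by (cases t) (auto simp: Omega_def)
  then have "{t \<in> Omega n. cherries t = 0} = {}" by blast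
  then show ?thesis unfolding cherry_count_def by (metis card.empty)
qed

lemma cherry_count_Suc:
  assumes "n \<ge> 1"
  shows "real (Suc n) * cherry_count (Suc n) (Suc c)
       = 2 * (real n + 1 + 2 * real c) * cherry_count n (Suc c)
         + 2 * (real n - 2 * real c) * cherry_count n c"
proof -
  have "real (Suc n) * cherry_count (Suc n) (Suc c)
      = real (Suc n) * (\<Sum>t\<in>Omega (Suc n). of_bool (cherries t = Suc c))"
    by (simp only: cherry_count_eq_sum)
  also have "\<dots> = 2 * (\<Sum>t\<in>Omega n. (real n - 2 * real c) * of_bool (cherries t = c)
                            + (real n + 1 + 2 * real c) * of_bool (cherries t = Suc c))"
    unfolding sum_cherries_Omega_Suc[OF assms, of "\<lambda>x. of_bool (x = Suc c)"]
    by (intro arg_cong[where f = "(*) 2"] sum.cong) auto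
  also have "\<dots> = 2 * (real n + 1 + 2 * real c) * cherry_count n (Suc c)
         + 2 * (real n - 2 * real c) * cherry_count n c"
    unfolding sum.distrib sum_distrib_left[symmetric] cherry_count_eq_sum by (simp add: algebra_simps)
  finally show ?thesis .
qed

text \<open>Equivalently, \<open>cherry_count n c = 2^(n - 2c) (n - 2)! / ((n - 2c)! (c - 1)! c!)\<close> for \<open>1 \<le> c \<le> n / 2\<close>.\<close>

lemma cherry_count_ratio:
  assumes "n \<ge> 1"
  shows "4 * real c * (real c + 1) * cherry_count n (Suc c)
       = (real n - 2 * real c) * (real n - 2 * real c - 1) * cherry_count n c"
  using assms
proof (induction n arbitrary: c rule: dec_induct)
  case base
  then show ?case by (cases c) (simp_all add: cherry_count_eq_0)
next
  case (step n)
  show ?case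
  proof (cases c)
    case 0
    then show ?thesis using step.hyps by (simp add: cherry_count_0)
  next
    case (Suc d)
    txt \<open>\<open>Suc n\<close> times the claim is a linear combination of the recurrences for \<open>Suc c\<close> and \<open>c\<close>
      and the induction hypotheses at \<open>c\<close> and \<open>d = c - 1\<close>.\<close>
    have "real (Suc n) * (4 * real c * (real c + 1) * cherry_count (Suc n) (Suc c))
        = real (Suc n) * ((real (Suc n) - 2 * real c) * (real (Suc n) - 2 * real c - 1)
            * cherry_count (Suc n) c)"
      using cherry_count_Suc[OF step.hyps(1), of c] cherry_count_Suc[OF step.hyps(1), of d]
        step.IH[of c] step.IH[of d] unfolding Suc by (simp add: algebra_simps) algebra
    then show ?thesis by simp
  qed
qed

definition cherry_prob :: "nat \<Rightarrow> nat \<Rightarrow> real" where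
  "cherry_prob n c = real (cherry_count n c) / real (card (Omega n))"

lemma uexp_cherries:
  assumes "n \<ge> 2"
  shows "uexp n (\<lambda>t. f (cherries t)) = (\<Sum>c\<in>{1..n}. cherry_prob n c * f c)"
  unfolding uexp_def sum_Omega_cherries[OF assms] cherry_prob_def
  by (simp add: sum_divide_distrib mult_ac)

lemma sum_cherry_prob:
  assumes "n \<ge> 2"
  shows "(\<Sum>c\<in>{1..n}. cherry_prob n c) = 1"
  using uexp_cherries[OF assms, of "\<lambda>_. 1"] card_Omega_pos[of n] assms by (simp add: uexp_def)

section \<open>Tails of the cherry distribution\<close>

lemma cherry_ratio_growth:
  fixes n c e :: real
  assumes "0 < e" "4 \<le> e * n" "1 \<le> c" "e * n \<le> n - 4 * c"
  shows "(1 + e) * (4 * c * (c + 1)) \<le> (n - 2 * c) * (n - 2 * c - 1)"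
proof -
  have n: "n \<ge> 0" using zero_less_mult_pos[of e n] assms by linarith
  have c: "4 * c \<le> n" "c + 1 \<le> n / 2" using assms by linarith+
  have "4 * c * (c + 1) \<le> n * (n / 2)"
    by (rule mult_mono) (use c n assms(3) in auto)
  then have "e * (4 * c * (c + 1)) \<le> (e * n) * n / 2"
    using assms(1) by (simp add: mult.assoc)
  moreover have "(e * n) * n \<le> (n - 4 * c) * n" using assms(4) n by (rule mult_right_mono)
  moreover have "4 * n \<le> (e * n) * n" using assms(2) n by (rule mult_right_mono)
  moreover have "(n - 2 * c) * (n - 2 * c - 1) - 4 * c * (c + 1) = (n - 4 * c) * n - n - 2 * c"
    by (simp add: algebra_simps)
  ultimately show ?thesis using c by (simp add: algebra_simps)
qed

lemma cherry_ratio_decay: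
  fixes n c e :: real
  assumes "0 < e" "0 \<le> c" "e * n \<le> 4 * c - n" "2 * c + 2 \<le> n"
  shows "(1 + e) * ((n - 2 * c) * (n - 2 * c - 1)) \<le> 4 * c * (c + 1)"
proof -
  have n: "n \<ge> 0" using assms by linarith
  have "(n - 2 * c) * (n - 2 * c - 1) \<le> n * n"
    using assms by (intro mult_mono) auto
  then have "e * ((n - 2 * c) * (n - 2 * c - 1)) \<le> (e * n) * n"
    using assms(1) by (simp add: mult.assoc)
  moreover have "(e * n) * n \<le> (4 * c - n) * n" using assms(3) n by (rule mult_right_mono)
  moreover have "4 * c * (c + 1) - (n - 2 * c) * (n - 2 * c - 1) = (4 * c - n) * n + n + 2 * c"
    by (simp add: algebra_simps)
  ultimately show ?thesis using assms by (simp add: algebra_simps)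
qed

lemma cherry_count_growth:
  assumes "n \<ge> 1" "0 < e" "4 \<le> e * real n" "1 \<le> c" "e * real n \<le> real n - 4 * real c"
  shows "(1 + e) * cherry_count n c \<le> cherry_count n (Suc c)"
proof -
  have "4 * real c * (real c + 1) * ((1 + e) * cherry_count n c)
      = (1 + e) * (4 * real c * (real c + 1)) * cherry_count n c"
    by (simp only: mult_ac)
  also have "\<dots> \<le> (real n - 2 * real c) * (real n - 2 * real c - 1) * cherry_count n c"
    using assms by (intro mult_right_mono cherry_ratio_growth) auto
  also have "\<dots> = 4 * real c * (real c + 1) * cherry_count n (Suc c)"
    using cherry_count_ratio[OF assms(1)] by simp
  finally show ?thesis using assms(4) by (simp add: mult_le_cancel_left_pos)
qed

lemma cherry_count_decay:
  assumes "n \<ge> 1" "0 < e" "e * real n \<le> 4 * real c - real n"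
  shows "(1 + e) * cherry_count n (Suc c) \<le> cherry_count n c"
proof (cases "n < 2 * Suc c")
  case False
  have "0 < e * real n" using assms by simp
  then have "c \<ge> 1" using assms(3) by simp
  have "4 * real c * (real c + 1) * ((1 + e) * cherry_count n (Suc c))
      = (1 + e) * (4 * real c * (real c + 1) * cherry_count n (Suc c))"
    by (simp only: mult_ac)
  also have "\<dots> = (1 + e) * ((real n - 2 * real c) * (real n - 2 * real c - 1)) * cherry_count n c"
    using cherry_count_ratio[OF assms(1)] by (simp only: mult_ac)
  also have "\<dots> \<le> 4 * real c * (real c + 1) * cherry_count n c"
    using assms False by (intro mult_right_mono cherry_ratio_decay) auto
  finally show ?thesis using \<open>c \<ge> 1\<close> by (simp add: mult_le_cancel_left_pos)
qed (simp add: cherry_count_eq_0)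

lemma power_mult_le_of_growth:
  fixes f :: "nat \<Rightarrow> real"
  assumes "0 \<le> r" "\<And>j. j < L \<Longrightarrow> r * f j \<le> f (Suc j)"
  shows "r ^ L * f 0 \<le> f L"
  using assms(2)
proof (induction L)
  case (Suc L)
  have "r ^ Suc L * f 0 = r * (r ^ L * f 0)" by simp
  also have "\<dots> \<le> r * f L" using Suc assms(1) by (intro mult_left_mono) auto
  also have "\<dots> \<le> f (Suc L)" using Suc.prems by simp
  finally show ?case .
qed simp

lemma inverse_power_nat_floor_le_powr:
  fixes b y :: real
  assumes "1 \<le> b" "0 \<le> y"
  shows "inverse (b ^ nat \<lfloor>y\<rfloor>) \<le> b powr (1 - y)"
proof -
  have "b ^ nat \<lfloor>y\<rfloor> = b powr real (nat \<lfloor>y\<rfloor>)"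
    by (rule powr_realpow[symmetric]) (use assms in simp)
  then have "inverse (b ^ nat \<lfloor>y\<rfloor>) = b powr (- real (nat \<lfloor>y\<rfloor>))"
    by (simp add: powr_minus)
  also have "\<dots> \<le> b powr (1 - y)"
  proof (rule powr_mono)
    have "real (nat \<lfloor>y\<rfloor>) = \<lfloor>y\<rfloor>" using assms by simp
    then show "- real (nat \<lfloor>y\<rfloor>) \<le> 1 - y" using real_of_int_floor_add_one_gt[of y] by linarith
  qed (use assms in simp)
  finally show ?thesis .
qed

lemma cherry_count_le_card: "cherry_count n c \<le> card (Omega n)"
  unfolding cherry_count_def by (rule card_mono[OF finite_Omega]) auto

lemma cherry_count_tail:
  assumes "n \<ge> 1" "0 < e" "2 \<le> e * real n" "1 \<le> c" "e * real n \<le> \<bar>real c - real n / 4\<bar>"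
    and L: "2 * real L \<le> e * real n"
  shows "(1 + 2 * e) ^ L * cherry_count n c \<le> card (Omega n)"
proof (cases "real c \<le> real n / 4")
  case True
  have "(1 + 2 * e) ^ L * cherry_count n (c + 0) \<le> cherry_count n (c + L)"
  proof (rule power_mult_le_of_growth[where f = "\<lambda>j. real (cherry_count n (c + j))"])
    fix j assume "j < L"
    have "e * real n \<le> real n / 4 - real c" using assms(5) True by (simp add: abs_of_nonpos)
    with L \<open>j < L\<close> have "2 * e * real n \<le> real n - 4 * real (c + j)" by simp
    then show "(1 + 2 * e) * cherry_count n (c + j) \<le> cherry_count n (c + Suc j)"
      using assms cherry_count_growth[of n "2 * e" "c + j"] by simp
  qed (use assms in auto)
  then show ?thesis using cherry_count_le_card[of n "c + L"] by simp
next
  case False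
  have "(1 + 2 * e) ^ L * cherry_count n (c - 0) \<le> cherry_count n (c - L)"
  proof (rule power_mult_le_of_growth[where f = "\<lambda>j. real (cherry_count n (c - j))"])
    fix j assume "j < L"
    with assms False have "Suc j \<le> c" "2 * e * real n \<le> 4 * real (c - Suc j) - real n"
      by (auto simp: of_nat_diff)
    then show "(1 + 2 * e) * cherry_count n (c - j) \<le> cherry_count n (c - Suc j)"
      using cherry_count_decay[of n "2 * e" "c - Suc j"] assms by (simp add: Suc_diff_Suc)
  qed (use assms in auto)
  then show ?thesis using cherry_count_le_card[of n "c - L"] by simp
qed

lemma cherry_prob_tail:
  assumes "0 < e" "2 \<le> e * real n" "1 \<le> c" "e * real n \<le> \<bar>real c - real n / 4\<bar>"
  shows "cherry_prob n c \<le> (1 + 2 * e) powr (1 - e * real n / 2)"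
proof -
  define L where "L = nat \<lfloor>e * real n / 2\<rfloor>"
  have "n \<ge> 1" using assms by (cases n) auto
  have "2 * real L \<le> e * real n"
    using assms of_int_floor_le[of "e * real n / 2"] by (simp add: L_def)
  with assms \<open>n \<ge> 1\<close> have "(1 + 2 * e) ^ L * cherry_count n c \<le> card (Omega n)"
    by (intro cherry_count_tail)
  then have "cherry_prob n c \<le> inverse ((1 + 2 * e) ^ L)"
    using card_Omega_pos[OF \<open>n \<ge> 1\<close>] assms(1)
    by (simp add: cherry_prob_def field_simps)
  also have "\<dots> \<le> (1 + 2 * e) powr (1 - e * real n / 2)"
    unfolding L_def using assms by (intro inverse_power_nat_floor_le_powr) auto
  finally show ?thesis .
qed

section \<open>Inverse moments of concentrated distributions\<close>

lemma ratio_bounds_of_near: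
  fixes a e m x :: real
  assumes "0 < e" "e < a" "0 < m" "\<bar>x - a * m\<bar> < e * m"
  shows "a / (a + e) \<le> a * m / x" "a * m / x \<le> a / (a - e)"
proof -
  from assms(4) have x: "(a - e) * m < x" "x < (a + e) * m" by (auto simp: algebra_simps)
  have "0 < (a - e) * m" using assms by simp
  with x have "0 < x" by linarith
  have "a / (a + e) = a * m / ((a + e) * m)" using assms by simp
  also have "\<dots> \<le> a * m / x"
    using x \<open>0 < x\<close> assms by (intro divide_left_mono) auto
  finally show "a / (a + e) \<le> a * m / x" .
  have "a * m / x \<le> a * m / ((a - e) * m)"
    using x assms mult_pos_pos[OF \<open>0 < x\<close> \<open>0 < (a - e) * m\<close>] by (intro divide_left_mono) auto
  also have "\<dots> = a / (a - e)" using assms by simp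
  finally show "a * m / x \<le> a / (a - e)" .
qed

lemma inverse_moment_lower_bound:
  fixes p :: "nat \<Rightarrow> real" and n k :: nat and a e \<theta> :: real
  assumes "0 < e" "e < a" "\<And>c. 0 \<le> p c" "(\<Sum>c\<in>{1..n}. p c) = 1" "0 \<le> \<theta>"
    and tail: "\<And>c. c \<in> {1..n} \<Longrightarrow> e * real n \<le> \<bar>real c - a * real n\<bar> \<Longrightarrow> p c \<le> \<theta>"
  shows "(a / (a + e)) ^ k - real n * \<theta> \<le> (\<Sum>c\<in>{1..n}. p c * (a * real n / real c) ^ k)"
proof -
  have "n > 0" using assms(4) by (cases n) auto
  have "(\<Sum>c\<in>{1..n}. p c * (a / (a + e)) ^ k - \<theta>) \<le> (\<Sum>c\<in>{1..n}. p c * (a * real n / real c) ^ k)"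
  proof (rule sum_mono)
    fix c assume c: "c \<in> {1..n}"
    show "p c * (a / (a + e)) ^ k - \<theta> \<le> p c * (a * real n / real c) ^ k"
    proof (cases "\<bar>real c - a * real n\<bar> < e * real n")
      case True
      with assms \<open>n > 0\<close> have "p c * (a / (a + e)) ^ k \<le> p c * (a * real n / real c) ^ k"
        by (intro mult_left_mono power_mono ratio_bounds_of_near) auto
      then show ?thesis using assms(5) by linarith
    next
      case False
      have "p c * (a / (a + e)) ^ k \<le> p c"
        using assms(1,2,3) by (intro mult_left_le) (auto intro: power_le_one)
      moreover have "0 \<le> p c * (a * real n / real c) ^ k"
        using assms(1,2,3) by simp
      ultimately show ?thesis using tail[OF c] False by linarith
    qed
  qed
  then show ?thesis using assms(4) by (simp add: sum_subtractf sum_distrib_right[symmetric])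
qed

lemma inverse_moment_upper_bound:
  fixes p :: "nat \<Rightarrow> real" and n k :: nat and a e \<theta> :: real
  assumes "0 < e" "e < a" "\<And>c. 0 \<le> p c" "(\<Sum>c\<in>{1..n}. p c) = 1" "0 \<le> \<theta>"
    and tail: "\<And>c. c \<in> {1..n} \<Longrightarrow> e * real n \<le> \<bar>real c - a * real n\<bar> \<Longrightarrow> p c \<le> \<theta>"
  shows "(\<Sum>c\<in>{1..n}. p c * (a * real n / real c) ^ k) \<le> (a / (a - e)) ^ k + real n * \<theta> * (a * real n) ^ k"
proof -
  have "n > 0" using assms(4) by (cases n) auto
  have "(\<Sum>c\<in>{1..n}. p c * (a * real n / real c) ^ k)
      \<le> (\<Sum>c\<in>{1..n}. p c * (a / (a - e)) ^ k + \<theta> * (a * real n) ^ k)"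
  proof (rule sum_mono)
    fix c assume c: "c \<in> {1..n}"
    show "p c * (a * real n / real c) ^ k \<le> p c * (a / (a - e)) ^ k + \<theta> * (a * real n) ^ k"
    proof (cases "\<bar>real c - a * real n\<bar> < e * real n")
      case True
      with assms \<open>n > 0\<close> have "p c * (a * real n / real c) ^ k \<le> p c * (a / (a - e)) ^ k"
        by (intro mult_left_mono power_mono ratio_bounds_of_near) auto
      moreover have "0 \<le> \<theta> * (a * real n) ^ k" using assms(1,2,5) by simp
      ultimately show ?thesis by linarith
    next
      case False
      have "a * real n / real c \<le> a * real n / 1"
        using c assms(1,2) by (intro divide_left_mono) auto
      then have "p c * (a * real n / real c) ^ k \<le> \<theta> * (a * real n) ^ k"
        using tail[OF c] False c assms(1,2,3,5) by (intro mult_mono power_mono) auto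
      moreover have "0 \<le> p c * (a / (a - e)) ^ k" using assms(1,2,3) by simp
      ultimately show ?thesis by linarith
    qed
  qed
  then show ?thesis using assms(4) by (simp add: sum.distrib sum_distrib_right[symmetric])
qed

lemma ex_power_ratios_near_1:
  fixes a d :: real
  assumes "0 < a" "0 < d"
  obtains e where "0 < e" "e < a" "(a / (a - e)) ^ k < 1 + d" "1 - d < (a / (a + e)) ^ k"
proof -
  have "((\<lambda>e. (a / (a - e)) ^ k) \<longlongrightarrow> 1) (at_right 0)" "((\<lambda>e. (a / (a + e)) ^ k) \<longlongrightarrow> 1) (at_right 0)"
    using assms(1) by (auto intro!: tendsto_eq_intros)
  with assms have "\<forall>\<^sub>F e in at_right 0. 0 < e \<and> e < a \<and> (a / (a - e)) ^ k < 1 + d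
      \<and> 1 - d < (a / (a + e)) ^ k"
    by (intro eventually_conj eventually_at_right_less order_tendstoD eventually_at_right_real[of 0 a]) auto
  then show ?thesis using that eventually_happens' trivial_limit_at_right_real by blast
qed

lemma tendsto_inverse_moment_of_concentration:
  fixes p :: "nat \<Rightarrow> nat \<Rightarrow> real" and a :: real and k :: nat
  assumes "0 < a" "\<And>n c. 0 \<le> p n c"
    and total: "\<forall>\<^sub>F n in at_top. (\<Sum>c\<in>{1..n}. p n c) = 1"
    and tail: "\<And>e. 0 < e \<Longrightarrow> \<exists>\<theta>. ((\<lambda>n. real n ^ Suc k * \<theta> n) \<longlongrightarrow> 0) at_top \<and>
      (\<forall>\<^sub>F n in at_top. 0 \<le> \<theta> n \<and>
         (\<forall>c\<in>{1..n}. e * real n \<le> \<bar>real c - a * real n\<bar> \<longrightarrow> p n c \<le> \<theta> n))"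
  shows "((\<lambda>n. \<Sum>c\<in>{1..n}. p n c * (a * real n / real c) ^ k) \<longlongrightarrow> 1) at_top"
proof (rule tendstoI)
  fix d :: real assume "0 < d"
  then obtain e where e: "0 < e" "e < a" "(a / (a - e)) ^ k < 1 + d / 2" "1 - d / 2 < (a / (a + e)) ^ k"
    using ex_power_ratios_near_1[of a "d / 2"] assms(1) by auto
  obtain \<theta> where lim: "((\<lambda>n. real n ^ Suc k * \<theta> n) \<longlongrightarrow> 0) at_top"
    and ev: "\<forall>\<^sub>F n in at_top. 0 \<le> \<theta> n \<and>
         (\<forall>c\<in>{1..n}. e * real n \<le> \<bar>real c - a * real n\<bar> \<longrightarrow> p n c \<le> \<theta> n)"
    using tail[OF e(1)] by blast
  have "((\<lambda>n. real n * \<theta> n) \<longlongrightarrow> 0) at_top"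
  proof (rule tendsto_sandwich[OF _ _ tendsto_const lim])
    show "\<forall>\<^sub>F n in at_top. 0 \<le> real n * \<theta> n" using ev by eventually_elim simp
    show "\<forall>\<^sub>F n in at_top. real n * \<theta> n \<le> real n ^ Suc k * \<theta> n"
      using ev eventually_ge_at_top[of 1]
    proof eventually_elim
      case (elim n)
      then have "real n * 1 \<le> real n * real n ^ k" by (intro mult_left_mono one_le_power) auto
      with elim show ?case by (intro mult_right_mono) auto
    qed
  qed
  then have "\<forall>\<^sub>F n in at_top. real n * \<theta> n < d / 2" using \<open>0 < d\<close> by (intro order_tendstoD) auto
  moreover have "((\<lambda>n. real n ^ Suc k * \<theta> n * a ^ k) \<longlongrightarrow> 0) at_top"
    using lim by (rule tendsto_mult_left_zero)
  then have "\<forall>\<^sub>F n in at_top. real n * \<theta> n * (a * real n) ^ k < d / 2"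
    using \<open>0 < d\<close> by (intro order_tendstoD) (auto simp: power_mult_distrib mult_ac)
  ultimately show "\<forall>\<^sub>F n in at_top. dist (\<Sum>c\<in>{1..n}. p n c * (a * real n / real c) ^ k) 1 < d"
    using ev total
  proof eventually_elim
    case (elim n)
    then have "(a / (a + e)) ^ k - real n * \<theta> n \<le> (\<Sum>c\<in>{1..n}. p n c * (a * real n / real c) ^ k)"
      "(\<Sum>c\<in>{1..n}. p n c * (a * real n / real c) ^ k) \<le> (a / (a - e)) ^ k + real n * \<theta> n * (a * real n) ^ k"
      using inverse_moment_lower_bound[of e a "p n" n "\<theta> n" k]
        inverse_moment_upper_bound[of e a "p n" n "\<theta> n" k] e assms(2) by auto
    with elim e show ?case by (simp add: dist_real_def abs_less_iff)
  qed
qed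

lemma cherry_prob_concentrated:
  assumes "0 < e"
  shows "\<exists>\<theta>. ((\<lambda>n. real n ^ Suc k * \<theta> n) \<longlongrightarrow> 0) at_top \<and>
    (\<forall>\<^sub>F n in at_top. 0 \<le> \<theta> n \<and>
       (\<forall>c\<in>{1..n}. e * real n \<le> \<bar>real c - 1 / 4 * real n\<bar> \<longrightarrow> cherry_prob n c \<le> \<theta> n))"
proof (intro exI[of _ "\<lambda>n. (1 + 2 * e) powr (1 - e * real n / 2)"] conjI)
  show "((\<lambda>n. real n ^ Suc k * (1 + 2 * e) powr (1 - e * real n / 2)) \<longlongrightarrow> 0) at_top"
    using assms by real_asymp
  have "\<forall>\<^sub>F n in at_top. 2 \<le> e * real n" using assms by real_asymp
  then show "\<forall>\<^sub>F n in at_top. 0 \<le> (1 + 2 * e) powr (1 - e * real n / 2) \<and>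
      (\<forall>c\<in>{1..n}. e * real n \<le> \<bar>real c - 1 / 4 * real n\<bar> \<longrightarrow>
         cherry_prob n c \<le> (1 + 2 * e) powr (1 - e * real n / 2))"
    by eventually_elim (use assms cherry_prob_tail in auto)
qed

theorem proposition2:
  fixes k :: nat
  shows "(\<lambda>n. uexp n (\<lambda>t. real (branches 2 t) powi (- int k)))
           \<sim>[at_top] (\<lambda>n. (real n / 4) powi (- int k))"
proof (rule asymp_equivI')
  have "\<forall>\<^sub>F n in at_top. uexp n (\<lambda>t. real (branches 2 t) powi (- int k)) / (real n / 4) powi (- int k)
      = (\<Sum>c\<in>{1..n}. cherry_prob n c * (1 / 4 * real n / real c) ^ k)"
    using eventually_ge_at_top[of 2]
  proof eventually_elim
    case (elim n)
    then show ?case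
      unfolding branches_2_eq_cherries uexp_cherries[OF elim, of "\<lambda>c. real c powi - int k"]
        sum_divide_distrib
      by (intro sum.cong) (auto simp: power_int_minus power_divide field_simps)
  qed
  moreover have "((\<lambda>n. \<Sum>c\<in>{1..n}. cherry_prob n c * (1 / 4 * real n / real c) ^ k) \<longlongrightarrow> 1) at_top"
    by (rule tendsto_inverse_moment_of_concentration[OF _ _ _ cherry_prob_concentrated])
      (use eventually_mono[OF eventually_ge_at_top[of 2] sum_cherry_prob] in \<open>simp_all add: cherry_prob_def\<close>)
  ultimately show "((\<lambda>n. uexp n (\<lambda>t. real (branches 2 t) powi (- int k)) / (real n / 4) powi (- int k))
      \<longlongrightarrow> 1) at_top"
    by (rule tendsto_cong[THEN iffD2])
qed

end
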